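(* If $z$ is a real number with $0<|z|\le 1/\alpha$, then \[ \sum_{k=1}^\infty\frac{F_{2k}\zeta(2k)z^{2k}}{k(2k+1)} = \frac{2\ln\alpha}{\sqrt5}-\frac{\beta\operatorname{Cl}_2(2\pi\alpha z)-\alpha\operatorname{Cl}_2(2\pi\beta z)}{2\sqrt5\,\pi z}, \] \[ \sum_{k=1}^\infty\frac{L_{2k}\zeta(2k)z^{2k}}{k(2k+1)} = -2+2\ln(2\pi z)-\frac{\beta\operatorname{Cl}_2(2\pi\alpha z)+\alpha\operatorname{Cl}_2(2\pi\beta z)}{2\pi z}. \]
   Context: $F_n$, $L_n$ are the Fibonacci and Lucas numbers ($F_0=0,F_1=1$, $L_0=2,L_1=1$, $w_n=w_{n-1}+w_{n-2}$); $\alpha=(1+\sqrt5)/2$, $\beta=(1-\sqrt5)/2$. $\zeta$ is the Riemann zeta function and $\operatorname{Cl}_2(x)=\sum_{k\ge1}\sin(kx)/k^2$ is the Clausen function. *)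

theory Defs
  imports "HOL-Analysis.Analysis" "HOL-Number_Theory.Fib"
begin

fun lucas :: "nat \<Rightarrow> nat" where
  "lucas 0 = 2"
| "lucas (Suc 0) = 1"
| "lucas (Suc (Suc n)) = lucas (Suc n) + lucas n"

definition golden_alpha :: real where "golden_alpha = (1 + sqrt 5) / 2"
definition golden_beta :: real where "golden_beta = (1 - sqrt 5) / 2"

definition zeta_real :: "real \<Rightarrow> real" where
  "zeta_real s = (\<Sum>n. 1 / real (Suc n) powr s)"

definition clausen2 :: "real \<Rightarrow> real" where
  "clausen2 x = (\<Sum>k. sin (real (Suc k) * x) / (real (Suc k))\<^sup>2)"

end

(*
  Write f(x) for the zeta series sum_k zeta(2k) x^(2k) / (k (2k+1)). Expanding each zeta(2k) as a
  series and interchanging the nonnegative double sum turns the logarithm of Euler's sine product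
  into sum_k zeta(2k) x^(2k) / k = ln(pi x) - ln(sin(pi x)), which is the derivative of x f(x).
  Hence 2 pi (x f(x) - x ln(2 pi x) + x) is the primitive of -2 pi ln(2 sin(pi t)) vanishing at 0.
  The same log-sine integral equals Cl_2(2 pi x): the Abel means sum_k r^k sin(k theta) / k^2 can be
  differentiated termwise for r < 1, and dominated convergence passes to r = 1. Evenness extends the
  resulting identity to 0 < |x| <= 1, and the Binet formulas for F_n and L_n, together with
  alpha beta = -1, reduce both series of the theorem to this identity at x = alpha z and x = beta z.
*)
theory Submission
  imports Defs "HOL-Real_Asymp.Real_Asymp"
begin

section \<open>Even zeta values and the sine product\<close>

lemma inverse_power_le_inverse_square:
  fixes x :: real
  assumes "1 \<le> x" "1 \<le> k"
  shows "1 / x ^ (2*k) \<le> 1 / x\<^sup>2"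
  using assms by (intro divide_left_mono power_increasing) auto

lemma zeta_real_even_sums:
  assumes "k \<ge> 1"
  shows "(\<lambda>n. 1 / real (Suc n) ^ (2*k)) sums zeta_real (2 * real k)"
proof -
  have powr_eq: "real (Suc n) powr (2 * real k) = real (Suc n) ^ (2*k)" for n
    using powr_realpow[of "real (Suc n)" "2*k"] by simp
  have "summable (\<lambda>n. 1 / real (Suc n) ^ 2)"
    using inverse_squares_sums by (simp add: sums_iff)
  then have "summable (\<lambda>n. 1 / real (Suc n) ^ (2*k))"
    by (rule summable_comparison_test[rotated])
       (use assms inverse_power_le_inverse_square in auto)
  then show ?thesis
    unfolding zeta_real_def powr_eq by (rule summable_sums)
qed

lemma zeta_real_even_bounds:
  assumes "k \<ge> 1"
  shows "0 \<le> zeta_real (2 * real k) \<and> zeta_real (2 * real k) \<le> 2"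
proof -
  note zeta = zeta_real_even_sums[OF assms]
  have squares: "(\<lambda>n. 1 / real (Suc n) ^ 2) sums (pi\<^sup>2 / 6)"
    using inverse_squares_sums by simp
  have "zeta_real (2 * real k) \<le> pi\<^sup>2 / 6"
    by (rule sums_le[OF _ zeta squares]) (use assms inverse_power_le_inverse_square in auto)
  moreover have "pi\<^sup>2 \<le> (3.2::real)\<^sup>2"
    using pi_approx pi_gt_zero by (intro power_mono) auto
  moreover have "0 \<le> zeta_real (2 * real k)"
    by (rule sums_le[OF _ sums_zero zeta]) simp
  ultimately show ?thesis
    by (simp add: power2_eq_square)
qed

lemma sums_minus_ln_one_minus:
  fixes u :: real
  assumes "\<bar>u\<bar> < 1"
  shows "(\<lambda>k. u ^ Suc k / real (Suc k)) sums (- ln (1 - u))"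
proof -
  have "(\<lambda>n. - ((-(-u))^n) / of_nat n) sums ln (1 + (-u))"
    by (rule ln_series') (use assms in simp)
  then have "(\<lambda>n. u^n / real n) sums (- ln (1 - u))"
    using sums_minus by fastforce
  then show ?thesis
    by (subst sums_Suc_iff) simp
qed

lemma sums_swap_nonneg:
  fixes F :: "nat \<Rightarrow> nat \<Rightarrow> real"
  assumes nonneg: "\<And>n k. 0 \<le> F n k"
    and rows: "\<And>n. (\<lambda>k. F n k) sums g n"
    and total: "g sums L"
    and columns: "\<And>k. (\<lambda>n. F n k) sums h k"
  shows "h sums L"
proof -
  have rows': "((\<lambda>k. F n k) has_sum g n) UNIV" for n
    using rows nonneg by (rule sums_nonneg_imp_has_sum)
  have "0 \<le> g n" for n
    by (rule sums_le[OF _ sums_zero rows]) (use nonneg in simp)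
  then have total': "(g has_sum L) UNIV"
    using total by (intro sums_nonneg_imp_has_sum)
  have "(\<lambda>(n, k). F n k) summable_on UNIV \<times> UNIV"
    by (rule summable_on_SigmaI[where g = g]) (use rows' total' nonneg in \<open>auto simp: has_sum_iff\<close>)
  then have "((\<lambda>(n, k). F n k) has_sum L) (UNIV \<times> UNIV)"
    by (rule has_sum_SigmaI[where g = g, rotated 2]) (use rows' total' in auto)
  then have swapped: "((\<lambda>(k, n). F n k) has_sum L) (UNIV \<times> UNIV)"
    by (subst (asm) has_sum_swap) simp
  have "((\<lambda>n. F n k) has_sum h k) UNIV" for k
    using columns nonneg by (rule sums_nonneg_imp_has_sum)
  then have "(h has_sum L) UNIV"
    by (intro has_sum_Sigma'[OF swapped]) simp
  then show ?thesis
    by (rule has_sum_imp_sums)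
qed

lemma sums_minus_ln_sin_product:
  fixes t :: real
  assumes "0 < t" "t < 1"
  shows "(\<lambda>n. - ln (1 - t\<^sup>2 / real (Suc n) ^ 2)) sums (ln (pi * t) - ln (sin (pi * t)))"
proof -
  have factor_pos: "0 < 1 - t\<^sup>2 / real k ^ 2" if "k \<ge> 1" for k :: nat
  proof -
    have "t\<^sup>2 < 1"
      using assms by (simp add: abs_square_less_1)
    also have "\<dots> \<le> real k ^ 2"
      using that by simp
    finally show ?thesis
      using that by (simp add: field_simps)
  qed
  have sin_pos: "0 < sin (pi * t)"
    using assms by (intro sin_gt_zero) auto
  have ln_prod: "ln (\<Prod>k=1..N. 1 - t\<^sup>2 / real k ^ 2) = (\<Sum>n<N. ln (1 - t\<^sup>2 / real (Suc n) ^ 2))" for N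
    using factor_pos
    by (subst ln_prod) (auto simp: sum.atLeast1_atMost_eq dest: less_imp_neq[symmetric])
  have "(\<lambda>N. \<Prod>k=1..N. 1 - t\<^sup>2 / real k ^ 2) \<longlonglongrightarrow> sin (pi * t) / (pi * t)"
    using sin_product_formula_real'[of t] assms by simp
  then have "(\<lambda>N. ln (\<Prod>k=1..N. 1 - t\<^sup>2 / real k ^ 2)) \<longlonglongrightarrow> ln (sin (pi * t) / (pi * t))"
    by (rule tendsto_ln) (use sin_pos assms in simp)
  then have "(\<lambda>n. ln (1 - t\<^sup>2 / real (Suc n) ^ 2)) sums ln (sin (pi * t) / (pi * t))"
    unfolding sums_def ln_prod[symmetric] .
  then have "(\<lambda>n. - ln (1 - t\<^sup>2 / real (Suc n) ^ 2)) sums - ln (sin (pi * t) / (pi * t))"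
    by (rule sums_minus)
  then show ?thesis
    using sin_pos assms by (simp add: ln_div)
qed

lemma zeta_real_even_power_sums:
  fixes t :: real
  assumes "0 < t" "t < 1"
  shows "(\<lambda>k. zeta_real (2 * real k) * t ^ (2*k) / real k) sums (ln (pi * t) - ln (sin (pi * t)))"
proof -
  define u where "u n = t\<^sup>2 / real (Suc n) ^ 2" for n
  have u: "0 \<le> u n" "u n < 1" for n
  proof -
    have "t\<^sup>2 < 1"
      using assms by (simp add: abs_square_less_1)
    also have "\<dots> \<le> real (Suc n) ^ 2"
      by simp
    finally show "u n < 1" "0 \<le> u n"
      by (simp_all add: u_def field_simps)
  qed
  have "(\<lambda>k. zeta_real (2 * real (Suc k)) * t ^ (2 * Suc k) / real (Suc k))
          sums (ln (pi * t) - ln (sin (pi * t)))"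
  proof (rule sums_swap_nonneg)
    show "(\<lambda>k. u n ^ Suc k / real (Suc k)) sums - ln (1 - t\<^sup>2 / real (Suc n) ^ 2)" for n
      using sums_minus_ln_one_minus[of "u n"] u[of n] by (simp add: u_def)
    show "(\<lambda>n. - ln (1 - t\<^sup>2 / real (Suc n) ^ 2)) sums (ln (pi * t) - ln (sin (pi * t)))"
      by (rule sums_minus_ln_sin_product[OF assms])
    show "(\<lambda>n. u n ^ Suc k / real (Suc k))
            sums (zeta_real (2 * real (Suc k)) * t ^ (2 * Suc k) / real (Suc k))" for k
    proof -
      have "u n ^ Suc k / real (Suc k) = t ^ (2 * Suc k) / real (Suc k) * (1 / real (Suc n) ^ (2 * Suc k))" for n
        by (simp only: u_def power_divide power_mult) simp
      then show ?thesis
        using sums_mult[OF zeta_real_even_sums[of "Suc k"], of "t ^ (2 * Suc k) / real (Suc k)"]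
        by (simp add: mult.commute)
    qed
  qed (use u in simp)
  then show ?thesis
    using sums_Suc_iff[of "\<lambda>k. zeta_real (2 * real k) * t ^ (2*k) / real k"] by simp
qed

section \<open>The zeta series and a log-sine primitive\<close>

text \<open>For \<open>k = 0\<close> the term is \<open>0\<close> because of division by zero (\<open>zeta_real 0\<close> is junk).\<close>

definition zeta_term :: "nat \<Rightarrow> real \<Rightarrow> real" where
  "zeta_term k x = zeta_real (2 * real k) * x ^ (2*k) / (real k * (2 * real k + 1))"

definition zeta_series :: "real \<Rightarrow> real" where
  "zeta_series x = (\<Sum>k. zeta_term k x)"

lemma abs_zeta_real_even_mult_power_le:
  assumes "k \<ge> 1"
  shows "\<bar>zeta_real (2 * real k) * x ^ (2*k)\<bar> \<le> 2 * \<bar>x\<bar> ^ (2*k)"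
  using zeta_real_even_bounds[OF assms] by (auto simp: abs_mult power_abs intro!: mult_right_mono)

lemma abs_zeta_term_le:
  assumes "\<bar>x\<bar> \<le> 1"
  shows "\<bar>zeta_term k x\<bar> \<le> 2 / real k ^ 2"
proof (cases "k = 0")
  case True
  then show ?thesis
    by (simp add: zeta_term_def)
next
  case False
  have "\<bar>x\<bar> ^ (2*k) \<le> 1"
    using assms by (simp add: power_le_one)
  then have "\<bar>zeta_real (2 * real k) * x ^ (2*k)\<bar> \<le> 2"
    using abs_zeta_real_even_mult_power_le[of k x] False by linarith
  moreover have "real k * real k \<le> real k * (2 * real k + 1)"
    by (rule mult_left_mono) auto
  ultimately show ?thesis
    using False by (auto simp: zeta_term_def abs_divide power2_eq_square intro!: frac_le)
qed

lemma abs_zeta_real_even_power_div_le: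
  assumes "\<bar>x\<bar> \<le> \<rho>"
  shows "\<bar>zeta_real (2 * real k) * x ^ (2*k) / real k\<bar> \<le> 2 * (\<rho>\<^sup>2) ^ k"
proof (cases "k = 0")
  case True
  then show ?thesis
    by simp
next
  case False
  have "\<bar>zeta_real (2 * real k) * x ^ (2*k)\<bar> / real k \<le> \<bar>zeta_real (2 * real k) * x ^ (2*k)\<bar>"
    using False by (intro divide_left_mono[of 1, simplified]) auto
  also have "\<dots> \<le> 2 * \<bar>x\<bar> ^ (2*k)"
    using False by (intro abs_zeta_real_even_mult_power_le) auto
  also have "\<dots> \<le> 2 * (\<rho>\<^sup>2) ^ k"
    using assms by (simp add: power_mult[symmetric] power_mono)
  finally show ?thesis
    by (simp add: abs_divide)
qed

lemma uniform_limit_zeta_series: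
  "uniform_limit {-1..1} (\<lambda>n x. \<Sum>k<n. zeta_term k x) zeta_series sequentially"
proof -
  have "summable (\<lambda>n. 1 / real (Suc n) ^ 2)"
    using inverse_squares_sums by (simp add: sums_iff)
  then have "summable (\<lambda>k. 2 * (1 / real k ^ 2))"
    by (subst (asm) summable_Suc_iff) (rule summable_mult)
  then show ?thesis
    unfolding zeta_series_def
    by (rule Weierstrass_m_test[rotated]) (use abs_zeta_term_le in auto)
qed

lemma zeta_term_sums:
  assumes "\<bar>x\<bar> \<le> 1"
  shows "(\<lambda>k. zeta_term k x) sums zeta_series x"
  unfolding sums_def
  by (rule tendsto_uniform_limitI[OF uniform_limit_zeta_series]) (use assms in auto)

lemma continuous_on_zeta_series: "continuous_on {-1..1} zeta_series"
proof (rule uniform_limit_theorem[OF _ uniform_limit_zeta_series])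
  have "zeta_term k = (\<lambda>x. zeta_real (2 * real k) / (real k * (2 * real k + 1)) * x ^ (2*k))" for k
    by (auto simp: zeta_term_def fun_eq_iff)
  then show "\<forall>\<^sub>F n in sequentially. continuous_on {-1..1} (\<lambda>x. \<Sum>k<n. zeta_term k x)"
    by (simp only:) (intro always_eventually allI continuous_intros)
qed simp

lemma has_real_derivative_zeta_term_times:
  "((\<lambda>x. zeta_term k x * x) has_real_derivative zeta_real (2 * real k) * x ^ (2*k) / real k) (at x)"
proof -
  define c where "c = zeta_real (2 * real k) / real k"
  define m where "m = real (Suc (2*k))"
  have "(\<lambda>x. zeta_term k x * x) = (\<lambda>x. c / m * x ^ Suc (2*k))"
    by (auto simp: zeta_term_def c_def m_def fun_eq_iff algebra_simps)
  moreover have "m \<noteq> 0"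
    by (simp add: m_def del: of_nat_Suc)
  then have "c / m * (m * x ^ (2*k)) = zeta_real (2 * real k) * x ^ (2*k) / real k"
    by (simp add: c_def)
  ultimately show ?thesis
    using DERIV_cmult[OF DERIV_pow, of "c / m" "Suc (2*k)" x] by (simp add: m_def)
qed

lemma has_real_derivative_times_zeta_series:
  assumes "0 < t" "t < 1"
  shows "((\<lambda>x. x * zeta_series x) has_real_derivative (ln (pi * t) - ln (sin (pi * t)))) (at t)"
proof -
  define \<rho> where "\<rho> = (1 + t) / 2"
  have \<rho>: "t < \<rho>" "\<rho> < 1"
    using assms by (auto simp: \<rho>_def)
  define f' where "f' k x = zeta_real (2 * real k) * x ^ (2*k) / real k" for k x
  have uniform: "uniformly_convergent_on {-\<rho>..\<rho>} (\<lambda>n x. \<Sum>k<n. f' k x)"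
  proof (rule Weierstrass_m_test')
    show "summable (\<lambda>k. 2 * (\<rho>\<^sup>2) ^ k)"
      using \<rho> assms by (intro summable_mult summable_geometric) (simp add: abs_square_less_1)
    fix k x
    assume "x \<in> {-\<rho>..\<rho>}"
    then show "norm (f' k x) \<le> 2 * (\<rho>\<^sup>2) ^ k"
      unfolding f'_def real_norm_def by (intro abs_zeta_real_even_power_div_le) auto
  qed
  have derivative: "((\<lambda>x. zeta_term k x * x) has_real_derivative f' k x) (at x within {-\<rho>..\<rho>})" for k x
    unfolding f'_def by (rule has_field_derivative_at_within[OF has_real_derivative_zeta_term_times])
  have "((\<lambda>x. \<Sum>k. zeta_term k x * x) has_real_derivative (\<Sum>k. f' k t)) (at t)"
    by (rule has_field_derivative_series'(2)[OF _ derivative uniform, of 0])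
       (use \<rho> assms in \<open>auto simp: zeta_term_def\<close>)
  moreover have "(\<Sum>k. f' k t) = ln (pi * t) - ln (sin (pi * t))"
    using zeta_real_even_power_sums[OF assms] by (simp add: f'_def sums_iff)
  ultimately have "((\<lambda>x. \<Sum>k. zeta_term k x * x) has_real_derivative (ln (pi * t) - ln (sin (pi * t)))) (at t)"
    by simp
  then show ?thesis
  proof (rule has_field_derivative_transform_within_open[where S = "{-1<..<1}"])
    fix x :: real
    assume "x \<in> {-1<..<1}"
    then have "(\<lambda>k. zeta_term k x * x) sums (zeta_series x * x)"
      by (intro sums_mult2 zeta_term_sums) auto
    then show "(\<Sum>k. zeta_term k x * x) = x * zeta_series x"
      by (simp add: sums_iff mult.commute)
  qed (use assms in auto)
qed

lemma has_real_derivative_log_sine_primitive: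
  assumes "0 < t" "t < 1"
  shows "((\<lambda>y. 2 * pi * (y * zeta_series y - y * ln (2 * pi * y) + y))
           has_real_derivative - 2 * pi * ln (2 * sin (pi * t))) (at t)"
proof -
  have "0 < sin (pi * t)"
    using assms by (intro sin_gt_zero) auto
  then have "ln (2 * sin (pi * t)) = ln 2 + ln (sin (pi * t))" "ln (2 * pi * t) = ln 2 + ln (pi * t)"
    using assms by (simp_all add: ln_mult mult.assoc)
  moreover have "((\<lambda>y. y * ln (2 * pi * y)) has_real_derivative ln (2 * pi * t) + 1) (at t)"
    using assms by (auto intro!: derivative_eq_intros)
  then have "((\<lambda>y. 2 * pi * (y * zeta_series y - y * ln (2 * pi * y) + y)) has_real_derivative
      2 * pi * ((ln (pi * t) - ln (sin (pi * t))) - (ln (2 * pi * t) + 1) + 1)) (at t)"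
    by (intro DERIV_cmult DERIV_add DERIV_diff has_real_derivative_times_zeta_series[OF assms] DERIV_ident)
  ultimately show ?thesis
    by (simp add: algebra_simps)
qed

lemma ln_two_sin_has_integral:
  assumes "0 < x" "x \<le> 1"
  shows "((\<lambda>t. - 2 * pi * ln (2 * sin (pi * t)))
           has_integral 2 * pi * (x * zeta_series x - x * ln (2 * pi * x) + x)) {0..x}"
proof -
  define Q where "Q y = 2 * pi * (y * zeta_series y - y * ln (2 * pi * y) + y)" for y
  have x_ln: "continuous_on {0..1} (\<lambda>y::real. y * ln (2 * pi * y))"
  proof (rule continuous_on_IccI)
    show "((\<lambda>y::real. y * ln (2 * pi * y)) \<longlongrightarrow> 0 * ln (2 * pi * 0)) (at_right 0)"
      by simp real_asymp
  qed (auto intro!: tendsto_eq_intros)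
  have "continuous_on {0..1} zeta_series"
    by (rule continuous_on_subset[OF continuous_on_zeta_series]) auto
  then have "continuous_on {0..1} Q"
    unfolding Q_def by (intro continuous_on_mult_left continuous_on_add continuous_on_diff
        continuous_on_mult continuous_on_id x_ln)
  then have "continuous_on {0..x} Q"
    by (rule continuous_on_subset) (use assms in auto)
  moreover have "(Q has_real_derivative - 2 * pi * ln (2 * sin (pi * t))) (at t)" if "0 < t" "t < x" for t
    unfolding Q_def[abs_def] using that assms by (intro has_real_derivative_log_sine_primitive) auto
  ultimately have "((\<lambda>t. - 2 * pi * ln (2 * sin (pi * t))) has_integral Q x - Q 0) {0..x}"
    using assms
    by (intro fundamental_theorem_of_calculus_interior)
       (auto simp: has_real_derivative_iff_has_vector_derivative[symmetric])
  then show ?thesis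
    by (simp add: Q_def)
qed

section \<open>The Clausen function as a log-sine integral\<close>

lemma cos_ln_sums:
  fixes r \<theta> :: real
  assumes "\<bar>r\<bar> < 1"
  shows "(\<lambda>k. r ^ Suc k * cos (real (Suc k) * \<theta>) / real (Suc k))
           sums (- ln (1 - 2 * r * cos \<theta> + r\<^sup>2) / 2)"
proof -
  define w where "w = complex_of_real r * cis \<theta>"
  have norm_w: "norm w = \<bar>r\<bar>"
    by (simp add: w_def norm_mult)
  then have "1 - w \<noteq> 0"
    using assms by auto
  have "(norm (1 - w))\<^sup>2 = (1 - r * cos \<theta>)\<^sup>2 + (r * sin \<theta>)\<^sup>2"
    by (simp add: cmod_power2 w_def)
  also have "\<dots> = 1 - 2 * r * cos \<theta> + r\<^sup>2 * ((sin \<theta>)\<^sup>2 + (cos \<theta>)\<^sup>2)"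
    using sin_cos_squared_add[of \<theta>] by algebra
  finally have norm_sq: "(norm (1 - w))\<^sup>2 = 1 - 2 * r * cos \<theta> + r\<^sup>2"
    by simp
  have "ln (1 - 2 * r * cos \<theta> + r\<^sup>2) = 2 * ln (norm (1 - w))"
    using ln_realpow[of "norm (1 - w)" 2] \<open>1 - w \<noteq> 0\<close> by (simp only: norm_sq)
  then have Re_Ln: "Re (Ln (1 - w)) = ln (1 - 2 * r * cos \<theta> + r\<^sup>2) / 2"
    using \<open>1 - w \<noteq> 0\<close> by simp
  have "(\<lambda>n. - ((-(-w)) ^ n) / of_nat n) sums Ln (1 + (-w))"
    by (rule Ln_series') (use norm_w assms in simp)
  then have "(\<lambda>n. Re (- (w ^ n) / of_nat n)) sums Re (Ln (1 - w))"
    by (simp add: sums_complex_iff)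
  moreover have "Re (- (w ^ n) / of_nat n) = - (r ^ n * cos (real n * \<theta>) / real n)" for n
    using cos_n_Re_cis_pow_n[of n \<theta>] by (simp add: w_def power_mult_distrib Re_divide_of_nat)
  ultimately have "(\<lambda>n. - (r ^ n * cos (real n * \<theta>) / real n)) sums (ln (1 - 2 * r * cos \<theta> + r\<^sup>2) / 2)"
    by (simp only: Re_Ln)
  then have "(\<lambda>n. r ^ n * cos (real n * \<theta>) / real n) sums (- ln (1 - 2 * r * cos \<theta> + r\<^sup>2) / 2)"
    using sums_minus by fastforce
  then show ?thesis
    by (subst sums_Suc_iff) simp
qed

text \<open>For \<open>r < 1\<close> the termwise derivative of the Abel means converges uniformly, to
  \<open>-ln \<bar>1 - r exp (i \<theta>)\<bar>\<close>; below, \<open>1 - 2 r cos \<theta> + r\<^sup>2 = \<bar>1 - r exp (i \<theta>)\<bar>\<^sup>2\<close>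
  is called the Abel kernel.\<close>

definition clausen2_abel :: "real \<Rightarrow> real \<Rightarrow> real" where
  "clausen2_abel r \<theta> = (\<Sum>k. r ^ Suc k * sin (real (Suc k) * \<theta>) / (real (Suc k))\<^sup>2)"

lemma clausen2_abel_one: "clausen2_abel 1 \<theta> = clausen2 \<theta>"
  by (simp add: clausen2_abel_def clausen2_def)

lemma has_real_derivative_clausen2_abel:
  assumes "\<bar>r\<bar> < 1"
  shows "(clausen2_abel r has_real_derivative - ln (1 - 2 * r * cos \<theta> + r\<^sup>2) / 2) (at \<theta>)"
proof -
  define f where "f k \<theta> = r ^ Suc k * sin (real (Suc k) * \<theta>) / (real (Suc k))\<^sup>2" for k \<theta>
  define f' where "f' k \<theta> = r ^ Suc k * cos (real (Suc k) * \<theta>) / real (Suc k)" for k \<theta>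
  have derivative: "(f k has_real_derivative f' k \<theta>) (at \<theta> within UNIV)" for k \<theta>
    unfolding f_def f'_def
    by (auto intro!: derivative_eq_intros simp: power2_eq_square simp del: of_nat_Suc)
  have "\<bar>f' k \<theta>\<bar> \<le> \<bar>r\<bar> ^ Suc k" for k \<theta>
  proof -
    have "\<bar>cos (real (Suc k) * \<theta>) / real (Suc k)\<bar> \<le> 1"
      by (simp add: abs_divide divide_le_eq_1 order.trans[OF abs_cos_le_one] del: of_nat_Suc)
    from mult_left_le[OF this abs_ge_zero[of "r ^ Suc k"]] show ?thesis
      by (simp add: f'_def abs_mult power_abs del: of_nat_Suc)
  qed
  then have uniform: "uniformly_convergent_on UNIV (\<lambda>n \<theta>. \<Sum>k<n. f' k \<theta>)"
    using assms by (intro Weierstrass_m_test'[where M = "\<lambda>k. \<bar>r\<bar> ^ Suc k"]) auto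
  have "(clausen2_abel r has_real_derivative (\<Sum>k. f' k \<theta>)) (at \<theta>)"
    using has_field_derivative_series'(2)[OF _ derivative uniform, of 0 \<theta>]
    by (simp add: f_def clausen2_abel_def[abs_def])
  moreover have "(\<Sum>k. f' k \<theta>) = - ln (1 - 2 * r * cos \<theta> + r\<^sup>2) / 2"
    using cos_ln_sums[OF assms] by (simp add: f'_def sums_iff)
  ultimately show ?thesis
    by simp
qed

lemma clausen2_abel_has_integral:
  assumes "\<bar>r\<bar> < 1" "0 \<le> x"
  shows "((\<lambda>t. - pi * ln (1 - 2 * r * cos (2 * pi * t) + r\<^sup>2))
           has_integral clausen2_abel r (2 * pi * x)) {0..x}"
proof -
  have derivative: "((\<lambda>t. clausen2_abel r (2 * pi * t)) has_real_derivative
          - pi * ln (1 - 2 * r * cos (2 * pi * t) + r\<^sup>2)) (at t within {0..x})" for t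
    by (rule has_field_derivative_at_within, rule DERIV_cong,
        rule DERIV_chain2[OF has_real_derivative_clausen2_abel[OF assms(1)] DERIV_cmult[OF DERIV_ident]])
       simp
  have "((\<lambda>t. - pi * ln (1 - 2 * r * cos (2 * pi * t) + r\<^sup>2))
               has_integral clausen2_abel r (2 * pi * x) - clausen2_abel r (2 * pi * 0)) {0..x}"
    by (rule fundamental_theorem_of_calculus[where f = "\<lambda>t. clausen2_abel r (2 * pi * t)"])
       (use assms derivative in \<open>auto simp: has_real_derivative_iff_has_vector_derivative[symmetric]\<close>)
  then show ?thesis
    by (simp add: clausen2_abel_def)
qed

lemma continuous_on_clausen2_abel: "continuous_on {0..1} (\<lambda>r. clausen2_abel r \<theta>)"
proof (rule uniform_limit_theorem)
  have "summable (\<lambda>k. 1 / (real (Suc k))\<^sup>2)"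
    using inverse_squares_sums by (simp add: sums_iff)
  moreover have "\<bar>r ^ Suc k * sin (real (Suc k) * \<theta>)\<bar> \<le> 1" if "r \<in> {0..1}" for r k
    using that by (auto simp: abs_mult power_le_one intro!: mult_le_one)
  ultimately show "uniform_limit {0..1}
      (\<lambda>n r. \<Sum>k<n. r ^ Suc k * sin (real (Suc k) * \<theta>) / (real (Suc k))\<^sup>2)
      (\<lambda>r. clausen2_abel r \<theta>) sequentially"
    unfolding clausen2_abel_def
    by (intro Weierstrass_m_test) (auto simp: abs_divide divide_right_mono simp del: of_nat_Suc)
qed (auto intro!: always_eventually continuous_intros)

lemma abs_ln_abel_kernel_le:
  fixes r \<theta> :: real
  assumes "1/2 \<le> r" "r \<le> 1" "0 < sin (\<theta> / 2)"
  shows "\<bar>ln (1 - 2 * r * cos \<theta> + r\<^sup>2)\<bar> \<le> 2 * ln 2 - 2 * ln (sin (\<theta> / 2))"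
proof -
  define y where "y = sin (\<theta> / 2)"
  define A where "A = 1 - 2 * r * cos \<theta> + r\<^sup>2"
  have "cos \<theta> = 1 - 2 * y\<^sup>2"
    using cos_double_sin[of "\<theta> / 2"] by (simp add: y_def)
  then have "A = 2 * y\<^sup>2 + (1 - r)\<^sup>2 + (2 * r - 1) * (1 - cos \<theta>)"
    by (simp add: A_def power2_eq_square algebra_simps)
  moreover have "0 \<le> (2 * r - 1) * (1 - cos \<theta>)"
    using assms by (intro mult_nonneg_nonneg) auto
  ultimately have lower: "2 * y\<^sup>2 \<le> A"
    using zero_le_power2[of "1 - r"] by linarith
  have "r * (- cos \<theta>) \<le> r * 1"
    using assms by (intro mult_left_mono) auto
  moreover have "r\<^sup>2 \<le> 1"
    using assms by (simp add: power_le_one)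
  ultimately have upper: "A \<le> 2\<^sup>2"
    using assms by (simp add: A_def)
  have y: "0 < y" "y \<le> 1"
    using assms by (auto simp: y_def)
  then have "0 < 2 * y\<^sup>2"
    by simp
  then have "0 < A"
    using lower by linarith
  then have "ln (2 * y\<^sup>2) \<le> ln A" "ln A \<le> ln (2\<^sup>2)"
    using lower upper \<open>0 < 2 * y\<^sup>2\<close> by (simp_all only: ln_le_cancel_iff zero_less_power)
  moreover have "ln (2 * y\<^sup>2) = ln 2 + 2 * ln y" "ln ((2::real)\<^sup>2) = 2 * ln 2"
    using y ln_realpow[of 2 2] by (simp_all add: ln_mult ln_realpow)
  moreover have "ln y \<le> 0"
    using y by simp
  ultimately show ?thesis
    unfolding A_def[symmetric] y_def[symmetric] using ln_ge_zero[of 2] by linarith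
qed

lemma tendsto_ln_abel_kernel:
  fixes r :: "nat \<Rightarrow> real"
  assumes "r \<longlonglongrightarrow> 1" "0 < sin (\<theta> / 2)"
  shows "(\<lambda>n. ln (1 - 2 * r n * cos \<theta> + (r n)\<^sup>2)) \<longlonglongrightarrow> 2 * ln (2 * sin (\<theta> / 2))"
proof -
  have "1 - 2 * 1 * cos \<theta> + 1\<^sup>2 = (2 * sin (\<theta> / 2))\<^sup>2"
    using cos_double_sin[of "\<theta> / 2"] by (simp add: power2_eq_square algebra_simps)
  moreover have "(\<lambda>n. 1 - 2 * r n * cos \<theta> + (r n)\<^sup>2) \<longlonglongrightarrow> 1 - 2 * 1 * cos \<theta> + 1\<^sup>2"
    by (intro tendsto_intros assms(1))
  ultimately have "(\<lambda>n. ln (1 - 2 * r n * cos \<theta> + (r n)\<^sup>2)) \<longlonglongrightarrow> ln ((2 * sin (\<theta> / 2))\<^sup>2)"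
    using assms(2) by (intro tendsto_ln) auto
  then show ?thesis
    using assms(2) ln_realpow[of "2 * sin (\<theta> / 2)" 2] by simp
qed

lemma clausen2_has_integral:
  assumes "0 < x" "x \<le> 1"
  shows "((\<lambda>t. - 2 * pi * ln (2 * sin (pi * t))) has_integral clausen2 (2 * pi * x)) {0..x}"
proof -
  define r where "r n = 1 - 1 / (real n + 2)" for n
  have r: "1/2 \<le> r n" "r n < 1" for n
    by (auto simp: r_def field_simps)
  have "r \<longlonglongrightarrow> 1"
    unfolding r_def by real_asymp
  define g where "g = (\<lambda>t::real. - 2 * pi * ln (2 * sin (pi * t)))"
  define h where "h t = 4 * pi * ln 2 + g t" for t
  have "g integrable_on {0..x}"
    using has_integral_integrable[OF ln_two_sin_has_integral[OF assms]] unfolding g_def .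
  then have dominant: "h integrable_on {0<..<x}"
    unfolding h_def integrable_on_Icc_iff_Ioo[symmetric] by (intro integrable_add integrable_const_ivl)
  have abel_limit: "(\<lambda>n. clausen2_abel (r n) (2 * pi * x)) \<longlonglongrightarrow> clausen2 (2 * pi * x)"
    using continuous_on_tendsto_compose[OF continuous_on_clausen2_abel \<open>r \<longlonglongrightarrow> 1\<close> _ always_eventually] r
    by (simp add: clausen2_abel_one less_imp_le order_trans[of 0 "1/2"])
  have dominated: "norm (- pi * ln (1 - 2 * r n * cos (2 * pi * t) + (r n)\<^sup>2)) \<le> h t"
    and pointwise: "(\<lambda>n. - pi * ln (1 - 2 * r n * cos (2 * pi * t) + (r n)\<^sup>2)) \<longlonglongrightarrow> g t"
    if "t \<in> {0<..<x}" for n t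
  proof -
    have "0 < sin (pi * t)"
      using that assms by (intro sin_gt_zero) auto
    then have "\<bar>ln (1 - 2 * r n * cos (2 * pi * t) + (r n)\<^sup>2)\<bar> \<le> 2 * ln 2 - 2 * ln (sin (pi * t))"
      using abs_ln_abel_kernel_le[of "r n" "2 * pi * t"] r[of n] by simp
    then have "norm (- pi * ln (1 - 2 * r n * cos (2 * pi * t) + (r n)\<^sup>2))
                 \<le> pi * (2 * ln 2 - 2 * ln (sin (pi * t)))"
      by (simp add: abs_mult)
    also have "\<dots> = h t"
      using \<open>0 < sin (pi * t)\<close> by (simp add: h_def g_def ln_mult algebra_simps)
    finally show "norm (- pi * ln (1 - 2 * r n * cos (2 * pi * t) + (r n)\<^sup>2)) \<le> h t" .
    show "(\<lambda>n. - pi * ln (1 - 2 * r n * cos (2 * pi * t) + (r n)\<^sup>2)) \<longlonglongrightarrow> g t"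
      using tendsto_mult_left[OF tendsto_ln_abel_kernel[OF \<open>r \<longlonglongrightarrow> 1\<close>, of "2 * pi * t"], of "- pi"]
        \<open>0 < sin (pi * t)\<close> by (simp add: g_def mult_ac)
  qed
  have abel_integral: "((\<lambda>t. - pi * ln (1 - 2 * r n * cos (2 * pi * t) + (r n)\<^sup>2))
                    has_integral clausen2_abel (r n) (2 * pi * x)) {0<..<x}" for n
    using clausen2_abel_has_integral[of "r n" x] r[of n] assms
    by (simp add: has_integral_Icc_iff_Ioo)
  have "(g has_integral clausen2 (2 * pi * x)) {0<..<x}"
    by (rule has_integral_dominated_convergence[OF abel_integral dominant _ _ abel_limit])
       (use dominated pointwise in auto)
  then show ?thesis
    by (simp add: g_def has_integral_Icc_iff_Ioo)
qed

lemma clausen2_eq_zeta_series: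
  assumes "0 < x" "x \<le> 1"
  shows "clausen2 (2 * pi * x) = 2 * pi * (x * zeta_series x - x * ln (2 * pi * x) + x)"
  using clausen2_has_integral[OF assms] ln_two_sin_has_integral[OF assms] by (rule has_integral_unique)

lemma clausen2_minus: "clausen2 (- \<theta>) = - clausen2 \<theta>"
proof -
  have "summable (\<lambda>k. 1 / (real (Suc k))\<^sup>2)"
    using inverse_squares_sums by (simp add: sums_iff)
  then have "summable (\<lambda>k. sin (real (Suc k) * \<theta>) / (real (Suc k))\<^sup>2)"
    by (rule summable_comparison_test[rotated]) (auto simp: abs_divide divide_right_mono simp del: of_nat_Suc)
  then show ?thesis
    unfolding clausen2_def by (simp add: suminf_minus)
qed

lemma zeta_term_sums_clausen2:
  assumes "0 < \<bar>x\<bar>" "\<bar>x\<bar> \<le> 1"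
  shows "(\<lambda>k. zeta_term k x) sums (ln (2 * pi * \<bar>x\<bar>) - 1 + clausen2 (2 * pi * x) / (2 * pi * x))"
proof -
  have "zeta_series \<bar>x\<bar> = ln (2 * pi * \<bar>x\<bar>) - 1 + clausen2 (2 * pi * \<bar>x\<bar>) / (2 * pi * \<bar>x\<bar>)"
    using clausen2_eq_zeta_series[of "\<bar>x\<bar>"] assms by (simp add: field_simps)
  moreover have "clausen2 (2 * pi * \<bar>x\<bar>) / (2 * pi * \<bar>x\<bar>) = clausen2 (2 * pi * x) / (2 * pi * x)"
    using clausen2_minus[of "2 * pi * x"] by (cases "0 \<le> x") simp_all
  moreover have "zeta_term k \<bar>x\<bar> = zeta_term k x" for k
    by (simp add: zeta_term_def power_even_abs)
  ultimately show ?thesis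
    using zeta_term_sums[of "\<bar>x\<bar>"] assms by simp
qed

lemma zeta_term_sums_clausen2_scaled:
  assumes "c * d = -1" "0 < \<bar>z\<bar>" "\<bar>c * z\<bar> \<le> 1"
  shows "(\<lambda>k. zeta_term k (c * z))
           sums (ln (2 * pi * \<bar>z\<bar>) + ln \<bar>c\<bar> - 1 - d * clausen2 (2 * pi * c * z) / (2 * pi * z))"
proof -
  have "c \<noteq> 0"
    using assms(1) by auto
  have "d = - 1 / c"
    using assms(1) \<open>c \<noteq> 0\<close> by (simp add: field_simps mult.commute)
  have "ln (2 * pi * \<bar>c * z\<bar>) = ln (2 * pi * \<bar>z\<bar>) + ln \<bar>c\<bar>"
    using assms(2) \<open>c \<noteq> 0\<close> by (simp add: abs_mult ln_mult mult.commute mult.left_commute)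
  moreover have "clausen2 (2 * pi * (c * z)) / (2 * pi * (c * z)) = - d * clausen2 (2 * pi * c * z) / (2 * pi * z)"
    unfolding \<open>d = - 1 / c\<close> using \<open>c \<noteq> 0\<close> assms(2) by (simp add: field_simps)
  ultimately show ?thesis
    using zeta_term_sums_clausen2[of "c * z"] assms \<open>c \<noteq> 0\<close> by simp
qed

section \<open>Golden-ratio scaling\<close>

lemma golden_alpha_gt_one: "1 < golden_alpha"
  by (simp add: golden_alpha_def)

lemma golden_alpha_times_beta: "golden_alpha * golden_beta = -1"
  by (simp add: golden_alpha_def golden_beta_def field_simps power2_eq_square[symmetric])

lemma fib_eq_golden: "real (fib n) = (golden_alpha ^ n - golden_beta ^ n) / sqrt 5"
  unfolding golden_alpha_def golden_beta_def by (rule fib_closed_form)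

lemma lucas_eq_golden: "real (lucas n) = golden_alpha ^ n + golden_beta ^ n"
proof (induction n rule: lucas.induct)
  case (3 n)
  have "x ^ Suc (Suc n) = x ^ Suc n + x ^ n" if "x\<^sup>2 = x + 1" for x :: real
  proof -
    have "x ^ Suc (Suc n) = x ^ n * x\<^sup>2"
      by (simp add: power2_eq_square)
    then show ?thesis
      using that by (simp add: algebra_simps)
  qed
  moreover have "golden_alpha\<^sup>2 = golden_alpha + 1" "golden_beta\<^sup>2 = golden_beta + 1"
    by (simp_all add: golden_alpha_def golden_beta_def power2_eq_square field_simps)
  ultimately show ?case
    using 3 by simp
qed (simp_all add: golden_alpha_def golden_beta_def field_simps)

lemma zeta_term_sums_golden:
  fixes z :: real
  assumes "0 < \<bar>z\<bar>" "\<bar>z\<bar> \<le> 1 / golden_alpha"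
  shows "(\<lambda>k. zeta_term k (golden_alpha * z)) sums (ln (2 * pi * \<bar>z\<bar>) + ln golden_alpha - 1
           - golden_beta * clausen2 (2 * pi * golden_alpha * z) / (2 * pi * z))"
    and "(\<lambda>k. zeta_term k (golden_beta * z)) sums (ln (2 * pi * \<bar>z\<bar>) - ln golden_alpha - 1
           - golden_alpha * clausen2 (2 * pi * golden_beta * z) / (2 * pi * z))"
proof -
  let ?\<alpha> = golden_alpha and ?\<beta> = golden_beta
  have \<alpha>\<beta>: "?\<alpha> * ?\<beta> = -1" "?\<beta> * ?\<alpha> = -1" and \<beta>: "\<bar>?\<beta>\<bar> = 1 / ?\<alpha>"
    using golden_alpha_times_beta golden_alpha_gt_one by (simp_all add: mult.commute field_simps abs_mult_pos')
  have \<alpha>z: "\<bar>?\<alpha> * z\<bar> \<le> 1" and "1 / ?\<alpha> \<le> 1"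
    using assms(2) golden_alpha_gt_one by (simp_all add: abs_mult field_simps)
  have \<beta>z: "\<bar>?\<beta> * z\<bar> \<le> 1"
    unfolding abs_mult by (rule mult_le_one) (use \<beta> \<open>1 / ?\<alpha> \<le> 1\<close> assms(2) in auto)
  show "(\<lambda>k. zeta_term k (?\<alpha> * z)) sums (ln (2 * pi * \<bar>z\<bar>) + ln ?\<alpha> - 1
          - ?\<beta> * clausen2 (2 * pi * ?\<alpha> * z) / (2 * pi * z))"
    using zeta_term_sums_clausen2_scaled[OF \<alpha>\<beta>(1) assms(1) \<alpha>z] golden_alpha_gt_one by simp
  show "(\<lambda>k. zeta_term k (?\<beta> * z)) sums (ln (2 * pi * \<bar>z\<bar>) - ln ?\<alpha> - 1
          - ?\<alpha> * clausen2 (2 * pi * ?\<beta> * z) / (2 * pi * z))"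
    using zeta_term_sums_clausen2_scaled[OF \<alpha>\<beta>(2) assms(1) \<beta>z] golden_alpha_gt_one \<beta> by (simp add: ln_div)
qed

theorem theorem17:
  fixes z :: real
  assumes "0 < \<bar>z\<bar>" and "\<bar>z\<bar> \<le> 1 / golden_alpha"
  shows "((\<lambda>k. real (fib (2*k)) * zeta_real (2 * real k) * z ^ (2*k) / (real k * (2 * real k + 1)))
           sums (2 * ln golden_alpha / sqrt 5
                 - (golden_beta * clausen2 (2 * pi * golden_alpha * z)
                    - golden_alpha * clausen2 (2 * pi * golden_beta * z)) / (2 * sqrt 5 * pi * z))) \<and>
         ((\<lambda>k. real (lucas (2*k)) * zeta_real (2 * real k) * z ^ (2*k) / (real k * (2 * real k + 1)))
           sums (-2 + 2 * ln (2 * pi * \<bar>z\<bar>)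
                 - (golden_beta * clausen2 (2 * pi * golden_alpha * z)
                    + golden_alpha * clausen2 (2 * pi * golden_beta * z)) / (2 * pi * z)))"
proof -
  let ?\<alpha> = golden_alpha and ?\<beta> = golden_beta and ?L = "ln (2 * pi * \<bar>z\<bar>)"
  let ?C\<alpha> = "clausen2 (2 * pi * ?\<alpha> * z)" and ?C\<beta> = "clausen2 (2 * pi * ?\<beta> * z)"
  note A = zeta_term_sums_golden(1)[OF assms] and B = zeta_term_sums_golden(2)[OF assms]
  have terms:
    "(zeta_term k (?\<alpha> * z) - zeta_term k (?\<beta> * z)) / sqrt 5
       = real (fib (2*k)) * zeta_real (2 * real k) * z ^ (2*k) / (real k * (2 * real k + 1))"
    "zeta_term k (?\<alpha> * z) + zeta_term k (?\<beta> * z)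
       = real (lucas (2*k)) * zeta_real (2 * real k) * z ^ (2*k) / (real k * (2 * real k + 1))" for k
    by (simp_all add: fib_eq_golden lucas_eq_golden zeta_term_def power_mult_distrib divide_inverse algebra_simps)
  have "z \<noteq> 0"
    using assms(1) by auto
  then have limits:
    "(?L + ln ?\<alpha> - 1 - ?\<beta> * ?C\<alpha> / (2 * pi * z) - (?L - ln ?\<alpha> - 1 - ?\<alpha> * ?C\<beta> / (2 * pi * z))) / sqrt 5
       = 2 * ln ?\<alpha> / sqrt 5 - (?\<beta> * ?C\<alpha> - ?\<alpha> * ?C\<beta>) / (2 * sqrt 5 * pi * z)"
    "?L + ln ?\<alpha> - 1 - ?\<beta> * ?C\<alpha> / (2 * pi * z) + (?L - ln ?\<alpha> - 1 - ?\<alpha> * ?C\<beta> / (2 * pi * z))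
       = -2 + 2 * ?L - (?\<beta> * ?C\<alpha> + ?\<alpha> * ?C\<beta>) / (2 * pi * z)"
    by (simp_all add: field_simps)
  show ?thesis
    using sums_divide[OF sums_diff[OF A B], of "sqrt 5"] sums_add[OF A B]
    unfolding terms limits by blast
qed

end
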